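(* Fix $\lambda\in\mathbb R$. The following four subsets of $\mathcal X$ are all equal: (a) $\Pi^{(a)}_\lambda=\{x\in\mathcal X: g_\lambda(x)=0\}$; (b) $\Pi^{(b)}_\lambda=\{x\in\mathcal X: H_\lambda(x,0)<H_\lambda(x,1)\}$; (c) $\Pi^{(c)}_\lambda=\{x\in\mathcal X: \exists \sigma\in\Sigma,\ \sigma\neq 0,\ \text{such that } J^{(h_{\sigma,\lambda})}_\lambda(x)<J^{(h_{0,\lambda})}_\lambda(x)\}$; (d) $\Pi^{(d)}_\lambda=\{x\in\mathcal X: \exists \sigma\in\Sigma,\ \sigma\neq 0,\ \text{such that } (1-\beta)\big(L(x,\sigma)-c(x,1)\big)<W_\lambda(x)-\mathbb E[\beta^\sigma W_\lambda(X_\sigma)\mid X_0=x]\}$.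
   Context: A restless bandit (RB) consists of a finite or countable state space $\mathcal X$, action set $\{0,1\}$ (0 = passive, 1 = active), transition matrices $P(0),P(1)$ on $\mathcal X$ ($P_{xy}(a)$ is the probability of moving from $x$ to $y$ under action $a$), and a cost function $c:\mathcal X\times\{0,1\}\to\mathbb R$; $\beta\in(0,1)$ is a discount factor. For $\lambda\in\mathbb R$ let $c_\lambda(x,a)=c(x,a)+\lambda a$. For a (possibly history-dependent) policy $h$, $J^{(h)}_\lambda(x)=(1-\beta)\mathbb E[\sum_{t\ge0}\beta^t c_\lambda(X_t,A_t)\mid X_0=x]$ where actions $A_t$ are chosen by $h$ and $X_{t+1}$ is drawn from $P_{X_t\,\cdot}(A_t)$. Let $V_\lambda$ be the unique fixed point of $V_\lambda(x)=\min\{H_\lambda(x,0),H_\lambda(x,1)\}$, where $H_\lambda(x,a)=(1-\beta)c_\lambda(x,a)+\beta\sum_{y}P_{xy}(a)V_\lambda(y)$. Let $g_\lambda(x)=0$ if $H_\lambda(x,0)<H_\lambda(x,1)$ and $g_\lambda(x)=1$ otherwise (ties broken toward the active action); $g_\lambda$ is an optimal Markov policy for minimizing $J_\lambda$. Let $\Sigma$ be the family of all stopping times with respect to the natural filtration of $\{X_t\}_{t\ge0}$. For $x\in\mathcal X$ and $\tau\in\Sigma$ define $M(x,\tau)=\mathbb E[\beta^\tau\mid X_0=x,\ A_t=0 \text{ for } t<\tau]$, $L(x,\tau)=\mathbb E[\sum_{t=0}^{\tau-1}\beta^t c(X_t,0)+\beta^\tau c(X_\tau,1)\mid X_0=x,\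 A_t=0\text{ for }t<\tau]$, and $W_\lambda(x)=(1-\beta)\lambda+\beta\sum_{y}P_{xy}(1)V_\lambda(y)$. Expectations involving $X_\sigma$ in (d) are under passive actions before time $\sigma$. For $\tau\in\Sigma$, $h_{\tau,\lambda}$ denotes the history-dependent policy that takes the passive action at times $0,\dots,\tau-1$, the active action at time $\tau$, and follows $g_\lambda$ thereafter; $h_{0,\lambda}$ is this policy with $\tau=0$. *)

theory Defs
  imports "HOL-Analysis.Analysis" "HOL-Library.Extended_Nat"
begin

text \<open>Actions are the naturals 0 (passive)
  and 1 (active). P a x y is the transition probability from x to y under action a,
  c x a is the cost, \<beta> the discount factor, l the subsidy/charge lambda.\<close>

definition cl :: "('x \<Rightarrow> nat \<Rightarrow> real) \<Rightarrow> real \<Rightarrow> 'x \<Rightarrow> nat \<Rightarrow> real" where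
  "cl c l x a = c x a + l * real a"

definition Hop :: "(nat \<Rightarrow> 'x \<Rightarrow> 'x \<Rightarrow> real) \<Rightarrow> ('x \<Rightarrow> nat \<Rightarrow> real) \<Rightarrow> real \<Rightarrow> real
    \<Rightarrow> ('x \<Rightarrow> real) \<Rightarrow> 'x \<Rightarrow> nat \<Rightarrow> real" where
  "Hop P c \<beta> l V x a = (1 - \<beta>) * cl c l x a + \<beta> * infsum (\<lambda>y. P a x y * V y) UNIV"

definition Vf :: "(nat \<Rightarrow> 'x \<Rightarrow> 'x \<Rightarrow> real) \<Rightarrow> ('x \<Rightarrow> nat \<Rightarrow> real) \<Rightarrow> real \<Rightarrow> real \<Rightarrow> 'x \<Rightarrow> real" where
  "Vf P c \<beta> l = (THE V. (\<exists>B. \<forall>x. \<bar>V x\<bar> \<le> B) \<and>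
      (\<forall>x. V x = min (Hop P c \<beta> l V x 0) (Hop P c \<beta> l V x 1)))"

definition Hf :: "(nat \<Rightarrow> 'x \<Rightarrow> 'x \<Rightarrow> real) \<Rightarrow> ('x \<Rightarrow> nat \<Rightarrow> real) \<Rightarrow> real \<Rightarrow> real \<Rightarrow> 'x \<Rightarrow> nat \<Rightarrow> real" where
  "Hf P c \<beta> l x a = Hop P c \<beta> l (Vf P c \<beta> l) x a"

definition gf :: "(nat \<Rightarrow> 'x \<Rightarrow> 'x \<Rightarrow> real) \<Rightarrow> ('x \<Rightarrow> nat \<Rightarrow> real) \<Rightarrow> real \<Rightarrow> real \<Rightarrow> 'x \<Rightarrow> nat" where
  "gf P c \<beta> l x = (if Hf P c \<beta> l x 0 < Hf P c \<beta> l x 1 then 0 else 1)"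

definition Wf :: "(nat \<Rightarrow> 'x \<Rightarrow> 'x \<Rightarrow> real) \<Rightarrow> ('x \<Rightarrow> nat \<Rightarrow> real) \<Rightarrow> real \<Rightarrow> real \<Rightarrow> 'x \<Rightarrow> real" where
  "Wf P c \<beta> l x = (1 - \<beta>) * l + \<beta> * infsum (\<lambda>y. P 1 x y * Vf P c \<beta> l y) UNIV"

text \<open>A (deterministic, history-dependent) policy
  h maps the history [X_0,...,X_t] to the action A_t.\<close>
definition path_prob :: "(nat \<Rightarrow> 'x \<Rightarrow> 'x \<Rightarrow> real) \<Rightarrow> ('x list \<Rightarrow> nat) \<Rightarrow> 'x list \<Rightarrow> real" where
  "path_prob P h xs = (\<Prod>i<length xs - 1. P (h (take (Suc i) xs)) (xs ! i) (xs ! Suc i))"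

definition paths :: "'x \<Rightarrow> nat \<Rightarrow> 'x list set" where
  "paths x n = {xs. length xs = Suc n \<and> xs ! 0 = x}"

definition Eh :: "(nat \<Rightarrow> 'x \<Rightarrow> 'x \<Rightarrow> real) \<Rightarrow> ('x list \<Rightarrow> nat) \<Rightarrow> 'x \<Rightarrow> nat
    \<Rightarrow> ('x list \<Rightarrow> real) \<Rightarrow> real" where
  "Eh P h x n f = infsum (\<lambda>xs. path_prob P h xs * f xs) (paths x n)"

definition Jh :: "(nat \<Rightarrow> 'x \<Rightarrow> 'x \<Rightarrow> real) \<Rightarrow> ('x \<Rightarrow> nat \<Rightarrow> real) \<Rightarrow> real \<Rightarrow> real
    \<Rightarrow> ('x list \<Rightarrow> nat) \<Rightarrow> 'x \<Rightarrow> real" where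
  "Jh P c \<beta> l h x = (1 - \<beta>) * (\<Sum>n. \<beta> ^ n * Eh P h x n (\<lambda>xs. cl c l (last xs) (h xs)))"

text \<open>Stopping times w.r.t. the natural filtration of the state process, on path
  space (values in nat extended by infinity): the event {tau = n} is determined by
  X_0,...,X_n. (For a countable state space these are exactly the events of the
  natural filtration.)\<close>
definition stopping_time :: "((nat \<Rightarrow> 'x) \<Rightarrow> enat) \<Rightarrow> bool" where
  "stopping_time \<tau> \<longleftrightarrow>
     (\<forall>n \<omega> \<omega>'. (\<forall>i\<le>n. \<omega> i = \<omega>' i) \<longrightarrow> (\<tau> \<omega> = enat n \<longleftrightarrow> \<tau> \<omega>' = enat n))"

text \<open>Any path extending a nonempty history (the value of a stopping time on events
  determined by the history does not depend on the extension).\<close>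
definition ext :: "'x list \<Rightarrow> nat \<Rightarrow> 'x" where
  "ext xs i = xs ! min i (length xs - 1)"

definition h_stop :: "(nat \<Rightarrow> 'x \<Rightarrow> 'x \<Rightarrow> real) \<Rightarrow> ('x \<Rightarrow> nat \<Rightarrow> real) \<Rightarrow> real \<Rightarrow> real
    \<Rightarrow> ((nat \<Rightarrow> 'x) \<Rightarrow> enat) \<Rightarrow> 'x list \<Rightarrow> nat" where
  "h_stop P c \<beta> l \<tau> xs =
     (if enat (length xs - 1) < \<tau> (ext xs) then 0
      else if \<tau> (ext xs) = enat (length xs - 1) then 1
      else gf P c \<beta> l (last xs))"

definition passive_pol :: "'x list \<Rightarrow> nat" where
  "passive_pol xs = 0"

text \<open>L(x,tau) = E[sum_{t<tau} beta^t c(X_t,0) + beta^tau c(X_tau,1)] under passive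
  actions before tau (beta^infinity = 0), expanded termwise.\<close>
definition Lf :: "(nat \<Rightarrow> 'x \<Rightarrow> 'x \<Rightarrow> real) \<Rightarrow> ('x \<Rightarrow> nat \<Rightarrow> real) \<Rightarrow> real
    \<Rightarrow> 'x \<Rightarrow> ((nat \<Rightarrow> 'x) \<Rightarrow> enat) \<Rightarrow> real" where
  "Lf P c \<beta> x \<tau> =
     (\<Sum>t. \<beta> ^ t * Eh P passive_pol x t (\<lambda>xs. if enat t < \<tau> (ext xs) then c (last xs) 0 else 0))
   + (\<Sum>t. \<beta> ^ t * Eh P passive_pol x t (\<lambda>xs. if \<tau> (ext xs) = enat t then c (last xs) 1 else 0))"

text \<open>E[beta^sigma f(X_sigma) | X_0 = x] under passive actions (beta^infinity = 0).\<close>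
definition Estop :: "(nat \<Rightarrow> 'x \<Rightarrow> 'x \<Rightarrow> real) \<Rightarrow> real \<Rightarrow> 'x \<Rightarrow> ((nat \<Rightarrow> 'x) \<Rightarrow> enat)
    \<Rightarrow> ('x \<Rightarrow> real) \<Rightarrow> real" where
  "Estop P \<beta> x \<sigma> f =
     (\<Sum>t. \<beta> ^ t * Eh P passive_pol x t (\<lambda>xs. if \<sigma> (ext xs) = enat t then f (last xs) else 0))"

end

(*
  The value of every policy h obeys the one-step recursion
    J_h(x) = (1 - beta) c_lambda(x, h[x]) + beta * sum_y P_xy(h[x]) J_h'(y),
  h' being h continued after the first state.  Two bounded solutions of recursions of this
  shape are compared by contraction: a bounded D with |D| <= beta * sup |D| vanishes.  This
  gives J = V_lambda for the greedy policy g_lambda and V_lambda <= J_h for every policy h.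

  Acting at once costs J(h_0) = H_lambda(x,1).  Waiting until the first time t >= 1 at which
  g_lambda asks for the active action makes h_sigma passive now and greedy afterwards, which
  costs H_lambda(x,0).  Together with V_lambda = min H_lambda(x,.) <= J(h_sigma) this shows
  (a) = (b) = (c).

  For (d), J(h_sigma)(x) and (1 - beta) L(x,sigma) + E[beta^sigma W_lambda(X_sigma)] satisfy the
  same recursion in the pair (x, sigma), where after one passive step sigma is replaced by the
  shifted stopping time; by contraction they agree.  Since J(h_0)(x) = (1 - beta) c(x,1) +
  W_lambda(x), the inequalities defining (c) and (d) are the same.
*)

theory Submission
  imports Defs
begin

section \<open>Infinite sums and contractions\<close>

lemma infsum_diff:
  fixes f g :: "'a \<Rightarrow> 'b::{topological_ab_group_add, t2_space}"
  assumes "f summable_on A" "g summable_on A"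
  shows "infsum (\<lambda>x. f x - g x) A = infsum f A - infsum g A"
  using infsum_add[OF assms(1) summable_on_uminus[THEN iffD2, OF assms(2)]]
  by (simp add: infsum_uminus)

lemma infsum_nat_eq_suminf:
  fixes f :: "nat \<Rightarrow> 'a::{topological_comm_monoid_add, t2_space}"
  assumes "f summable_on UNIV"
  shows "infsum f UNIV = suminf f"
  using assms has_sum_imp_sums sums_unique summable_iff_has_sum_infsum by metis

lemma suminf_infsum_swap:
  fixes a :: "nat \<Rightarrow> 'a \<Rightarrow> real"
  assumes p: "p summable_on UNIV" "\<And>y. 0 \<le> p y"
    and w: "summable w" "\<And>n. 0 \<le> w n"
    and dominated: "\<And>n y. \<bar>a n y\<bar> \<le> w n * p y"
  shows "summable (\<lambda>n. infsum (a n) UNIV)"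
    and "(\<Sum>n. infsum (a n) UNIV) = infsum (\<lambda>y. \<Sum>n. a n y) UNIV"
proof -
  have w_summable_on: "w summable_on UNIV"
    using summable_on_UNIV_nonneg_real_iff w by blast
  have "(\<lambda>(n, y). w n * p y) summable_on UNIV \<times> UNIV"
    by (rule summable_on_SigmaI[where g="\<lambda>n. w n * infsum p UNIV"])
       (use p w w_summable_on in \<open>auto intro: has_sum_cmult_right summable_on_cmult_left\<close>)
  then have "(\<lambda>z. norm ((\<lambda>(n, y). a n y) z)) summable_on UNIV \<times> UNIV"
    by (rule Infinite_Sum.abs_summable_on_comparison_test') (auto simp: dominated)
  then have a_summable: "(\<lambda>(n, y). a n y) summable_on UNIV \<times> UNIV"
    using summable_on_iff_abs_summable_on_real by blast
  have "(\<lambda>y. norm (a n y)) summable_on UNIV" for n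
    by (rule Infinite_Sum.abs_summable_on_comparison_test'[OF summable_on_cmult_right[OF p(1), of "w n"]])
       (simp add: dominated)
  then have a_n: "a n summable_on UNIV" for n
    using summable_on_iff_abs_summable_on_real by blast
  have "(\<lambda>n. norm (a n y)) summable_on UNIV" for y
    by (rule Infinite_Sum.abs_summable_on_comparison_test'[OF summable_on_cmult_left[OF w_summable_on, of "p y"]])
       (simp add: dominated)
  then have a_y: "(\<lambda>n. a n y) summable_on UNIV" for y
    using summable_on_iff_abs_summable_on_real by blast
  have outer: "(\<lambda>n. infsum (a n) UNIV) summable_on UNIV"
    using summable_on_SigmaD[where A=UNIV and B="\<lambda>_. UNIV", OF a_summable] a_n by simp
  then show "summable (\<lambda>n. infsum (a n) UNIV)"
    by (rule summable_on_imp_summable)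
  have "(\<Sum>n. infsum (a n) UNIV) = infsum (\<lambda>n. infsum (a n) UNIV) UNIV"
    using infsum_nat_eq_suminf[OF outer] by simp
  also have "\<dots> = infsum (\<lambda>y. infsum (\<lambda>n. a n y) UNIV) UNIV"
    using infsum_swap_banach[OF a_summable] by simp
  also have "\<dots> = infsum (\<lambda>y. \<Sum>n. a n y) UNIV"
    using infsum_nat_eq_suminf[OF a_y] by simp
  finally show "(\<Sum>n. infsum (a n) UNIV) = infsum (\<lambda>y. \<Sum>n. a n y) UNIV" .
qed

lemma nonpos_if_le_power:
  fixes d K \<beta> :: real
  assumes "0 \<le> \<beta>" "\<beta> < 1" "\<And>n. d \<le> \<beta> ^ n * K"
  shows "d \<le> 0"
proof -
  have "(\<lambda>n. \<beta> ^ n * K) \<longlonglongrightarrow> 0"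
    using LIMSEQ_power_zero[of \<beta>] assms(1,2) tendsto_mult_left_zero by auto
  then show ?thesis
    by (rule LIMSEQ_le_const) (use assms(3) in auto)
qed

lemma contraction_imp_zero:
  fixes D :: "'a \<Rightarrow> real"
  assumes "0 \<le> \<beta>" "\<beta> < 1"
    and bounded: "\<And>a. a \<in> S \<Longrightarrow> \<bar>D a\<bar> \<le> K"
    and contracting: "\<And>K' a. (\<And>b. b \<in> S \<Longrightarrow> \<bar>D b\<bar> \<le> K') \<Longrightarrow> a \<in> S \<Longrightarrow> \<bar>D a\<bar> \<le> \<beta> * K'"
    and "a \<in> S"
  shows "D a = 0"
proof -
  have "\<forall>a\<in>S. \<bar>D a\<bar> \<le> \<beta> ^ n * K" for n
    by (induction n) (use bounded contracting in \<open>auto simp: mult.assoc\<close>)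
  then have "\<bar>D a\<bar> \<le> 0"
    using nonpos_if_le_power[OF assms(1,2)] \<open>a \<in> S\<close> by blast
  then show ?thesis by simp
qed

lemma contraction_imp_nonneg:
  fixes D :: "'a \<Rightarrow> real"
  assumes "0 \<le> \<beta>" "\<beta> < 1"
    and bounded: "\<And>a. a \<in> S \<Longrightarrow> - K \<le> D a"
    and contracting: "\<And>K' a. (\<And>b. b \<in> S \<Longrightarrow> - K' \<le> D b) \<Longrightarrow> a \<in> S \<Longrightarrow> - (\<beta> * K') \<le> D a"
    and "a \<in> S"
  shows "0 \<le> D a"
proof -
  have "\<forall>a\<in>S. - (\<beta> ^ n * K) \<le> D a" for n
    by (induction n) (use bounded contracting in \<open>auto simp: mult.assoc\<close>)
  then have "- D a \<le> \<beta> ^ n * K" for n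
    using \<open>a \<in> S\<close> minus_le_iff by blast
  from nonpos_if_le_power[OF assms(1,2) this] show ?thesis by simp
qed

lemma geometric_Cauchy_limit:
  fixes X :: "nat \<Rightarrow> real"
  assumes "0 \<le> \<beta>" "\<beta> < 1" and close: "\<And>n k. \<bar>X (n + k) - X n\<bar> \<le> \<beta> ^ n * C"
  shows "X \<longlonglongrightarrow> lim X" and "\<bar>lim X - X n\<bar> \<le> \<beta> ^ n * C"
proof -
  have "norm (X (Suc n) - X n) \<le> \<beta> ^ n * C" for n
    using close[of n 1] by simp
  moreover have "summable (\<lambda>n. \<beta> ^ n * C)"
    using assms(1,2) by (intro summable_mult2 summable_geometric) simp
  ultimately have "summable (\<lambda>n. X (Suc n) - X n)"
    by (rule summable_comparison_test'[rotated])
  then have "convergent (\<lambda>n. X n - X 0)"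
    by (simp add: summable_iff_convergent sum_lessThan_telescope)
  then show lim: "X \<longlonglongrightarrow> lim X"
    by (simp add: convergent_diff_const_right_iff convergent_LIMSEQ_iff)
  have "(\<lambda>k. \<bar>X (k + n) - X n\<bar>) \<longlonglongrightarrow> \<bar>lim X - X n\<bar>"
    by (intro tendsto_rabs tendsto_diff LIMSEQ_ignore_initial_segment[OF lim] tendsto_const)
  then show "\<bar>lim X - X n\<bar> \<le> \<beta> ^ n * C"
    by (rule LIMSEQ_le_const2) (use close[of n] in \<open>simp add: add.commute\<close>)
qed

lemma bounded_contraction_fixpoint:
  fixes T :: "('a \<Rightarrow> real) \<Rightarrow> 'a \<Rightarrow> real"
  assumes "0 \<le> \<beta>" "\<beta> < 1" "0 \<le> B"
    and maps_bounded: "\<And>V x. (\<And>y. \<bar>V y\<bar> \<le> B) \<Longrightarrow> \<bar>T V x\<bar> \<le> B"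
    and contracting: "\<And>V U D x. (\<And>y. \<bar>V y\<bar> \<le> B) \<Longrightarrow> (\<And>y. \<bar>U y\<bar> \<le> B)
        \<Longrightarrow> (\<And>y. \<bar>V y - U y\<bar> \<le> D) \<Longrightarrow> \<bar>T V x - T U x\<bar> \<le> \<beta> * D"
  obtains W where "\<And>x. \<bar>W x\<bar> \<le> B" "\<And>x. T W x = W x"
proof -
  define I where "I n = (T ^^ n) (\<lambda>_. 0)" for n
  have I_Suc: "I (Suc n) = T (I n)" for n
    by (simp add: I_def)
  have I_bounded: "\<bar>I n x\<bar> \<le> B" for n x
    by (induction n arbitrary: x) (use \<open>0 \<le> B\<close> in \<open>simp_all add: I_def maps_bounded\<close>)
  have I_close: "\<bar>I (n + k) x - I n x\<bar> \<le> \<beta> ^ n * (2 * B)" for n k x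
  proof (induction n arbitrary: x)
    case 0
    show ?case
      using abs_triangle_ineq4[of "I k x" "I 0 x"] I_bounded[of k x] I_bounded[of 0 x] by simp
  next
    case (Suc n)
    have "\<bar>T (I (n + k)) x - T (I n) x\<bar> \<le> \<beta> * (\<beta> ^ n * (2 * B))"
      by (rule contracting[OF I_bounded I_bounded Suc.IH])
    then show ?case by (simp add: I_Suc mult.assoc)
  qed
  define W where "W x = lim (\<lambda>n. I n x)" for x
  have I_W: "(\<lambda>n. I n x) \<longlonglongrightarrow> W x" and W_close: "\<bar>W x - I n x\<bar> \<le> \<beta> ^ n * (2 * B)" for n x
    unfolding W_def by (rule geometric_Cauchy_limit[OF assms(1,2) I_close])+
  have W_bounded: "\<bar>W x\<bar> \<le> B" for x
    by (rule LIMSEQ_le_const2[OF tendsto_rabs[OF I_W]]) (use I_bounded in auto)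
  have "\<bar>T W x - W x\<bar> \<le> \<beta> ^ n * (\<beta> * (4 * B))" for n x
  proof -
    have "\<bar>T W x - T (I n) x\<bar> \<le> \<beta> * (\<beta> ^ n * (2 * B))"
      by (rule contracting[OF W_bounded I_bounded W_close])
    moreover have "\<bar>T (I n) x - W x\<bar> \<le> \<beta> * (\<beta> ^ n * (2 * B))"
      using W_close[of x "Suc n"] by (simp add: I_Suc abs_minus_commute)
    ultimately show ?thesis
      using abs_triangle_ineq[of "T W x - T (I n) x" "T (I n) x - W x"] by (simp add: algebra_simps)
  qed
  then have "\<bar>T W x - W x\<bar> \<le> 0" for x
    by (rule nonpos_if_le_power[OF assms(1,2)])
  then show ?thesis
    using W_bounded that by force
qed

lemma abs_min_diff_le: "\<bar>a - c\<bar> \<le> e \<Longrightarrow> \<bar>b - d\<bar> \<le> e \<Longrightarrow> \<bar>min a b - min c d\<bar> \<le> (e::real)"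
  unfolding min_def abs_le_iff by auto

section \<open>Transition kernels and path expectations\<close>

locale transition_kernels =
  fixes P :: "nat \<Rightarrow> 'x \<Rightarrow> 'x \<Rightarrow> real"
  assumes P_nonneg: "\<And>a x y. a \<le> 1 \<Longrightarrow> 0 \<le> P a x y"
    and P_has_sum: "\<And>a x. a \<le> 1 \<Longrightarrow> (P a x has_sum 1) UNIV"
begin

lemma P_summable: "a \<le> 1 \<Longrightarrow> P a x summable_on UNIV"
  using P_has_sum by (auto simp: summable_on_def)

lemma kernel_norm_summable:
  assumes "a \<le> 1" "\<And>y. \<bar>V y\<bar> \<le> K"
  shows "(\<lambda>y. norm (P a x y * V y)) summable_on UNIV"
    and "norm (P a x y * V y) \<le> P a x y * K"
proof -
  show le: "norm (P a x y * V y) \<le> P a x y * K" for y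
    using P_nonneg[OF assms(1)] assms(2)[of y] by (simp add: abs_mult mult_left_mono)
  show "(\<lambda>y. norm (P a x y * V y)) summable_on UNIV"
    by (rule Infinite_Sum.abs_summable_on_comparison_test'[OF summable_on_cmult_left[OF P_summable[OF assms(1)]]])
       (rule le)
qed

lemma kernel_summable:
  assumes "a \<le> 1" "\<And>y. \<bar>V y\<bar> \<le> K"
  shows "(\<lambda>y. P a x y * V y) summable_on UNIV"
  using kernel_norm_summable(1)[OF assms] summable_on_iff_abs_summable_on_real[of "\<lambda>y. P a x y * V y" UNIV] by simp

lemma kernel_infsum_bound:
  assumes "a \<le> 1" "\<And>y. \<bar>V y\<bar> \<le> K"
  shows "\<bar>infsum (\<lambda>y. P a x y * V y) UNIV\<bar> \<le> K"
proof -
  have "norm (infsum (\<lambda>y. P a x y * V y) UNIV) \<le> infsum (\<lambda>y. norm (P a x y * V y)) UNIV"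
    by (rule norm_infsum_bound[OF kernel_norm_summable(1)[OF assms]])
  also have "\<dots> \<le> infsum (\<lambda>y. P a x y * K) UNIV"
    by (rule infsum_mono[OF kernel_norm_summable(1)[OF assms] summable_on_cmult_left[OF P_summable[OF assms(1)]]])
       (rule kernel_norm_summable(2)[OF assms(1,2)])
  also have "\<dots> = K"
    using infsum_cmult_left'[of "P a x" K UNIV] infsumI[OF P_has_sum[OF assms(1)]] by simp
  finally show ?thesis by simp
qed

lemma kernel_infsum_lower:
  assumes "a \<le> 1" "\<And>y. - K \<le> V y" "\<And>y. \<bar>V y\<bar> \<le> K'"
  shows "- K \<le> infsum (\<lambda>y. P a x y * V y) UNIV"
proof -
  have "infsum (\<lambda>y. P a x y * (- K)) UNIV \<le> infsum (\<lambda>y. P a x y * V y) UNIV"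
    by (rule infsum_mono[OF summable_on_cmult_left[OF P_summable[OF assms(1)]] kernel_summable[OF assms(1,3)]])
       (rule mult_left_mono[OF assms(2) P_nonneg[OF assms(1)]])
  moreover have "infsum (\<lambda>y. P a x y * (- K)) UNIV = - K"
    using infsum_cmult_left'[of "P a x" "- K" UNIV] infsumI[OF P_has_sum[OF assms(1)]] by simp
  ultimately show ?thesis by simp
qed

lemma kernel_infsum_diff:
  assumes "a \<le> 1" "\<And>y. \<bar>V y\<bar> \<le> K" "\<And>y. \<bar>U y\<bar> \<le> K'"
  shows "infsum (\<lambda>y. P a x y * V y) UNIV - infsum (\<lambda>y. P a x y * U y) UNIV
       = infsum (\<lambda>y. P a x y * (V y - U y)) UNIV"
  using infsum_diff[OF kernel_summable[OF assms(1,2)] kernel_summable[OF assms(1,3)]]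
  by (simp add: right_diff_distrib)

end

definition binary_policy :: "('x list \<Rightarrow> nat) \<Rightarrow> bool" where
  "binary_policy h \<longleftrightarrow> (\<forall>xs. h xs \<le> 1)"

definition tail_policy :: "('x list \<Rightarrow> nat) \<Rightarrow> 'x \<Rightarrow> 'x list \<Rightarrow> nat" where
  "tail_policy h x = (\<lambda>ys. h (x # ys))"

lemma binary_tail_policy: "binary_policy h \<Longrightarrow> binary_policy (tail_policy h x)"
  by (simp add: binary_policy_def tail_policy_def)

lemma paths_0: "paths x 0 = {[x]}"
  by (auto simp: paths_def length_Suc_conv)

lemma paths_Suc: "paths x (Suc n) = (\<lambda>(y, ys). x # ys) ` (SIGMA y:UNIV. paths y n)"
proof safe
  fix xs assume "xs \<in> paths x (Suc n)"
  then obtain ys where "xs = x # ys" "length ys = Suc n"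
    by (auto simp: paths_def length_Suc_conv)
  then show "xs \<in> (\<lambda>(y, ys). x # ys) ` (SIGMA y:UNIV. paths y n)"
    by (intro image_eqI[of _ _ "(ys ! 0, ys)"]) (auto simp: paths_def)
qed (auto simp: paths_def)

lemma inj_on_paths_Cons: "inj_on (\<lambda>(y, ys). x # ys) (SIGMA y:UNIV. paths y n)"
  by (auto simp: inj_on_def paths_def)

lemma paths_nonempty_hd: "xs \<in> paths y n \<Longrightarrow> xs \<noteq> [] \<and> hd xs = y"
  by (cases xs) (auto simp: paths_def)

lemma path_prob_singleton: "path_prob P h [x] = 1"
  by (simp add: path_prob_def)

lemma path_prob_Cons:
  assumes "ys \<noteq> []"
  shows "path_prob P h (x # ys) = P (h [x]) x (hd ys) * path_prob P (tail_policy h x) ys"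
proof -
  obtain m where m: "length ys = Suc m" using assms by (cases ys) auto
  have "path_prob P h (x # ys)
      = (\<Prod>i<Suc m. P (h (take (Suc i) (x # ys))) ((x # ys) ! i) ((x # ys) ! Suc i))"
    by (simp add: path_prob_def m)
  also have "\<dots> = P (h [x]) x (hd ys) *
      (\<Prod>i<m. P (h (take (Suc (Suc i)) (x # ys))) ((x # ys) ! Suc i) ((x # ys) ! Suc (Suc i)))"
    by (subst prod.lessThan_Suc_shift) (simp add: hd_conv_nth assms)
  also have "(\<Prod>i<m. P (h (take (Suc (Suc i)) (x # ys))) ((x # ys) ! Suc i) ((x # ys) ! Suc (Suc i)))
      = path_prob P (tail_policy h x) ys"
    by (simp add: path_prob_def m tail_policy_def)
  finally show ?thesis .
qed

lemma path_prob_cong: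
  assumes "xs \<noteq> []" "\<And>ys. ys \<noteq> [] \<Longrightarrow> hd ys = hd xs \<Longrightarrow> h ys = h' ys"
  shows "path_prob P h xs = path_prob P h' xs"
  unfolding path_prob_def
proof (rule prod.cong[OF refl])
  fix i assume "i \<in> {..<length xs - 1}"
  then have "take (Suc i) xs \<noteq> []" "hd (take (Suc i) xs) = hd xs"
    using assms(1) by auto
  then show "P (h (take (Suc i) xs)) (xs ! i) (xs ! Suc i) = P (h' (take (Suc i) xs)) (xs ! i) (xs ! Suc i)"
    using assms(2) by simp
qed

lemma Eh_0: "Eh P h x 0 f = f [x]"
  by (simp add: Eh_def paths_0 path_prob_singleton)

lemma Eh_cong:
  assumes "\<And>ys. ys \<noteq> [] \<Longrightarrow> hd ys = x \<Longrightarrow> h ys = h' ys"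
    and "\<And>xs. xs \<in> paths x n \<Longrightarrow> f xs = f' xs"
  shows "Eh P h x n f = Eh P h' x n f'"
  unfolding Eh_def
proof (rule infsum_cong)
  fix xs assume "xs \<in> paths x n"
  with paths_nonempty_hd[OF this] show "path_prob P h xs * f xs = path_prob P h' xs * f' xs"
    using path_prob_cong[of xs h h' P] assms by simp
qed

context transition_kernels
begin

lemma path_prob_nonneg: "binary_policy h \<Longrightarrow> 0 \<le> path_prob P h xs"
  unfolding path_prob_def by (intro prod_nonneg) (auto intro: P_nonneg simp: binary_policy_def)

lemma path_prob_has_sum: "binary_policy h \<Longrightarrow> (path_prob P h has_sum 1) (paths x n)"
proof (induction n arbitrary: x h)
  case 0
  then show ?case
    unfolding paths_0 by (intro has_sum_finiteI) (auto simp: path_prob_singleton)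
next
  case (Suc n)
  define F where "F = (\<lambda>(y, ys). P (h [x]) x y * path_prob P (tail_policy h x) ys)"
  have a: "h [x] \<le> 1" using Suc.prems by (simp add: binary_policy_def)
  have inner: "((\<lambda>ys. F (y, ys)) has_sum P (h [x]) x y) (paths y n)" for y
    using has_sum_cmult_right[OF Suc.IH[OF binary_tail_policy[OF Suc.prems]]] by (simp add: F_def)
  have "F summable_on (SIGMA y:UNIV. paths y n)"
    by (rule summable_on_SigmaI[OF inner P_summable[OF a]])
       (auto simp: F_def intro!: mult_nonneg_nonneg P_nonneg[OF a] path_prob_nonneg
         binary_tail_policy Suc.prems)
  then have "(F has_sum 1) (SIGMA y:UNIV. paths y n)"
    by (rule has_sum_SigmaI[OF inner P_has_sum[OF a]])
  moreover have "(path_prob P h \<circ> (\<lambda>(y, ys). x # ys)) z = F z" if "z \<in> (SIGMA y:UNIV. paths y n)" for z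
  proof -
    obtain y ys where z: "z = (y, ys)" "ys \<in> paths y n" using \<open>z \<in> _\<close> by auto
    then show ?thesis using paths_nonempty_hd[OF z(2)] by (simp add: F_def path_prob_Cons)
  qed
  ultimately have "((path_prob P h \<circ> (\<lambda>(y, ys). x # ys)) has_sum 1) (SIGMA y:UNIV. paths y n)"
    using has_sum_cong by blast
  then show ?case
    by (simp add: paths_Suc has_sum_reindex[OF inj_on_paths_Cons])
qed

lemma Eh_summable_bound:
  assumes "binary_policy h" "\<And>xs. xs \<in> paths x n \<Longrightarrow> \<bar>f xs\<bar> \<le> K"
  shows "(\<lambda>xs. path_prob P h xs * f xs) summable_on paths x n"
    and "\<bar>Eh P h x n f\<bar> \<le> K"
proof -
  have majorant: "(\<lambda>xs. path_prob P h xs * K) summable_on paths x n"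
    using path_prob_has_sum[OF assms(1)] summable_on_cmult_left summable_on_def by blast
  have le: "norm (path_prob P h xs * f xs) \<le> path_prob P h xs * K" if "xs \<in> paths x n" for xs
    using path_prob_nonneg[OF assms(1)] assms(2)[OF that] by (simp add: abs_mult mult_left_mono)
  have norm_summable: "(\<lambda>xs. norm (path_prob P h xs * f xs)) summable_on paths x n"
    by (rule Infinite_Sum.abs_summable_on_comparison_test'[OF majorant le])
  then show "(\<lambda>xs. path_prob P h xs * f xs) summable_on paths x n"
    using summable_on_iff_abs_summable_on_real by blast
  have "norm (Eh P h x n f) \<le> infsum (\<lambda>xs. norm (path_prob P h xs * f xs)) (paths x n)"
    unfolding Eh_def by (rule norm_infsum_bound[OF norm_summable])
  also have "\<dots> \<le> infsum (\<lambda>xs. path_prob P h xs * K) (paths x n)"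
    by (rule infsum_mono[OF norm_summable majorant le])
  also have "\<dots> = K"
    using infsum_cmult_left'[of "path_prob P h" K] infsumI[OF path_prob_has_sum[OF assms(1)]]
    by simp
  finally show "\<bar>Eh P h x n f\<bar> \<le> K" by simp
qed

lemma Eh_Suc:
  assumes "binary_policy h" "\<And>xs. xs \<in> paths x (Suc n) \<Longrightarrow> \<bar>f xs\<bar> \<le> K"
  shows "Eh P h x (Suc n) f
       = infsum (\<lambda>y. P (h [x]) x y * Eh P (tail_policy h x) y n (\<lambda>ys. f (x # ys))) UNIV"
proof -
  define F :: "'x \<times> 'x list \<Rightarrow> real"
    where "F = (\<lambda>xs. path_prob P h xs * f xs) \<circ> (\<lambda>(y, ys). x # ys)"
  have "F summable_on (SIGMA y:UNIV. paths y n)"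
    using Eh_summable_bound(1)[of h x "Suc n" f K, OF assms]
    by (simp add: F_def paths_Suc summable_on_reindex[OF inj_on_paths_Cons])
  have "Eh P h x (Suc n) f = infsum F (SIGMA y:UNIV. paths y n)"
    unfolding Eh_def F_def paths_Suc by (rule infsum_reindex[OF inj_on_paths_Cons])
  also have "\<dots> = infsum (\<lambda>y. infsum (\<lambda>ys. F (y, ys)) (paths y n)) UNIV"
    by (rule infsum_Sigma_banach[OF \<open>F summable_on _\<close>, symmetric])
  also have "\<dots> = infsum (\<lambda>y. P (h [x]) x y * Eh P (tail_policy h x) y n (\<lambda>ys. f (x # ys))) UNIV"
  proof (rule infsum_cong)
    fix y
    have "infsum (\<lambda>ys. F (y, ys)) (paths y n)
        = infsum (\<lambda>ys. P (h [x]) x y * (path_prob P (tail_policy h x) ys * f (x # ys))) (paths y n)"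
    proof (rule infsum_cong)
      fix ys assume "ys \<in> paths y n"
      with paths_nonempty_hd[OF this]
      show "F (y, ys) = P (h [x]) x y * (path_prob P (tail_policy h x) ys * f (x # ys))"
        by (simp add: F_def path_prob_Cons)
    qed
    also have "\<dots> = P (h [x]) x y * Eh P (tail_policy h x) y n (\<lambda>ys. f (x # ys))"
      unfolding Eh_def by (rule infsum_cmult_right')
    finally show "infsum (\<lambda>ys. F (y, ys)) (paths y n)
        = P (h [x]) x y * Eh P (tail_policy h x) y n (\<lambda>ys. f (x # ys))" .
  qed
  finally show ?thesis .
qed

end

section \<open>Discounted sums and policy values\<close>

definition disc_sum :: "(nat \<Rightarrow> 'x \<Rightarrow> 'x \<Rightarrow> real) \<Rightarrow> real \<Rightarrow> ('x list \<Rightarrow> nat) \<Rightarrow> 'x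
    \<Rightarrow> (nat \<Rightarrow> 'x list \<Rightarrow> real) \<Rightarrow> real" where
  "disc_sum P \<beta> h x \<phi> = (\<Sum>t. \<beta> ^ t * Eh P h x t (\<phi> t))"

lemma Jh_eq_disc_sum: "Jh P c \<beta> l h x = (1 - \<beta>) * disc_sum P \<beta> h x (\<lambda>t xs. cl c l (last xs) (h xs))"
  by (simp add: Jh_def disc_sum_def)

lemma disc_sum_cong:
  assumes "\<And>ys. ys \<noteq> [] \<Longrightarrow> hd ys = x \<Longrightarrow> h ys = h' ys"
    and "\<And>t xs. xs \<in> paths x t \<Longrightarrow> \<phi> t xs = \<phi>' t xs"
  shows "disc_sum P \<beta> h x \<phi> = disc_sum P \<beta> h' x \<phi>'"
proof -
  have "Eh P h x t (\<phi> t) = Eh P h' x t (\<phi>' t)" for t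
    by (rule Eh_cong) (use assms in auto)
  then show ?thesis by (simp add: disc_sum_def)
qed

lemma Jh_cong:
  assumes "\<And>ys. ys \<noteq> [] \<Longrightarrow> hd ys = x \<Longrightarrow> h ys = h' ys"
  shows "Jh P c \<beta> l h x = Jh P c \<beta> l h' x"
proof -
  have same_cost: "cl c l (last xs) (h xs) = cl c l (last xs) (h' xs)" if "xs \<in> paths x t" for t xs
    using assms paths_nonempty_hd[OF that] by simp
  show ?thesis
    unfolding Jh_eq_disc_sum
    using disc_sum_cong[OF assms, where \<phi>="\<lambda>t xs. cl c l (last xs) (h xs)"
        and \<phi>'="\<lambda>t xs. cl c l (last xs) (h' xs)"]
      same_cost by simp
qed

locale discounted_bandit = transition_kernels P for P :: "nat \<Rightarrow> 'x \<Rightarrow> 'x \<Rightarrow> real" +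
  fixes c :: "'x \<Rightarrow> nat \<Rightarrow> real" and \<beta> cmax :: real
  assumes discount_pos: "0 < \<beta>" and discount_less_1: "\<beta> < 1"
    and cost_bounded: "\<And>x a. a \<le> 1 \<Longrightarrow> \<bar>c x a\<bar> \<le> cmax"
begin

lemma cmax_nonneg: "0 \<le> cmax"
  using cost_bounded[of 0 undefined] by simp

lemma summable_discounted: "summable (\<lambda>t. \<beta> ^ t * K)"
  using summable_geometric[of \<beta>] discount_pos discount_less_1 by (intro summable_mult2) auto

lemma suminf_discounted: "(\<Sum>t. \<beta> ^ t * K) = K / (1 - \<beta>)"
  using suminf_mult2[of "\<lambda>t. \<beta> ^ t" K] summable_geometric[of \<beta>] suminf_geometric[of \<beta>]
    discount_pos discount_less_1 by auto

lemma disc_sum_summable_bound: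
  assumes "binary_policy h" "\<And>t xs. \<bar>\<phi> t xs\<bar> \<le> K"
  shows "summable (\<lambda>t. \<beta> ^ t * Eh P h x t (\<phi> t))"
    and "\<bar>disc_sum P \<beta> h x \<phi>\<bar> \<le> K / (1 - \<beta>)"
proof -
  have term_bound: "\<bar>\<beta> ^ t * Eh P h x t (\<phi> t)\<bar> \<le> \<beta> ^ t * K" for t
    using Eh_summable_bound(2)[OF assms(1) assms(2)] discount_pos
    by (simp add: abs_mult mult_left_mono)
  have abs_summable: "summable (\<lambda>t. \<bar>\<beta> ^ t * Eh P h x t (\<phi> t)\<bar>)"
    by (rule summable_comparison_test'[OF summable_discounted]) (use term_bound in auto)
  then show "summable (\<lambda>t. \<beta> ^ t * Eh P h x t (\<phi> t))"
    by (rule summable_rabs_cancel)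
  have "\<bar>disc_sum P \<beta> h x \<phi>\<bar> \<le> (\<Sum>t. \<bar>\<beta> ^ t * Eh P h x t (\<phi> t)\<bar>)"
    unfolding disc_sum_def by (rule summable_rabs[OF abs_summable])
  also have "\<dots> \<le> (\<Sum>t. \<beta> ^ t * K)"
    by (rule suminf_le[OF term_bound abs_summable summable_discounted])
  finally show "\<bar>disc_sum P \<beta> h x \<phi>\<bar> \<le> K / (1 - \<beta>)"
    unfolding suminf_discounted .
qed

lemma Eh_linear:
  assumes "binary_policy h" "\<And>xs. \<bar>f xs\<bar> \<le> K" "\<And>xs. \<bar>g xs\<bar> \<le> K'"
  shows "Eh P h x n (\<lambda>xs. r * f xs + g xs) = r * Eh P h x n f + Eh P h x n g"
proof -
  have f: "(\<lambda>xs. path_prob P h xs * f xs) summable_on paths x n"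
    by (rule Eh_summable_bound(1)[OF assms(1)]) (rule assms(2))
  have g: "(\<lambda>xs. path_prob P h xs * g xs) summable_on paths x n"
    by (rule Eh_summable_bound(1)[OF assms(1)]) (rule assms(3))
  have "Eh P h x n (\<lambda>xs. r * f xs + g xs)
      = infsum (\<lambda>xs. r * (path_prob P h xs * f xs) + path_prob P h xs * g xs) (paths x n)"
    unfolding Eh_def by (simp add: distrib_left mult.left_commute)
  also have "\<dots> = r * Eh P h x n f + Eh P h x n g"
    unfolding Eh_def by (simp add: infsum_add[OF summable_on_cmult_right[OF f] g] infsum_cmult_right')
  finally show ?thesis .
qed

lemma disc_sum_linear:
  assumes "binary_policy h" "\<And>t xs. \<bar>\<phi> t xs\<bar> \<le> K" "\<And>t xs. \<bar>\<psi> t xs\<bar> \<le> K'"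
  shows "disc_sum P \<beta> h x (\<lambda>t xs. r * \<phi> t xs + \<psi> t xs)
       = r * disc_sum P \<beta> h x \<phi> + disc_sum P \<beta> h x \<psi>"
proof -
  have "(\<lambda>t. r * (\<beta> ^ t * Eh P h x t (\<phi> t))) sums (r * disc_sum P \<beta> h x \<phi>)"
    unfolding disc_sum_def
    by (intro sums_mult summable_sums disc_sum_summable_bound(1)[OF assms(1,2)])
  moreover have "(\<lambda>t. \<beta> ^ t * Eh P h x t (\<psi> t)) sums disc_sum P \<beta> h x \<psi>"
    unfolding disc_sum_def by (intro summable_sums disc_sum_summable_bound(1)[OF assms(1,3)])
  ultimately show ?thesis
    unfolding disc_sum_def Eh_linear[OF assms(1) assms(2) assms(3)]
    by (simp add: algebra_simps sums_unique[OF sums_add])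
qed

lemma suminf_Eh_Suc:
  assumes h: "binary_policy h" and \<phi>: "\<And>t xs. \<bar>\<phi> t xs\<bar> \<le> K"
  shows "(\<Sum>t. \<beta> ^ Suc t * Eh P h x (Suc t) (\<phi> (Suc t)))
     = \<beta> * infsum (\<lambda>y. P (h [x]) x y * disc_sum P \<beta> (tail_policy h x) y (\<lambda>t ys. \<phi> (Suc t) (x # ys))) UNIV"
proof -
  let ?a = "h [x]"
  define e where "e = (\<lambda>t y. Eh P (tail_policy h x) y t (\<lambda>ys. \<phi> (Suc t) (x # ys)))"
  define a where "a = (\<lambda>t y. \<beta> ^ t * (P ?a x y * e t y))"
  have act: "?a \<le> 1" using h by (simp add: binary_policy_def)
  have K: "0 \<le> \<beta> ^ t * K" for t using \<phi>[of 0 "[]"] discount_pos by simp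
  have dominated: "\<bar>a t y\<bar> \<le> \<beta> ^ t * K * P ?a x y" for t y
  proof -
    have "\<bar>e t y\<bar> \<le> K"
      unfolding e_def by (rule Eh_summable_bound(2)[OF binary_tail_policy[OF h]]) (rule \<phi>)
    then have "\<bar>P ?a x y * e t y\<bar> \<le> K * P ?a x y"
      using P_nonneg[OF act, of x y] by (simp add: abs_mult mult_left_mono mult.commute[of K])
    then show ?thesis
      using discount_pos by (simp add: a_def abs_mult mult_left_mono mult.assoc)
  qed
  note swap = suminf_infsum_swap[OF P_summable[OF act] P_nonneg[OF act] summable_discounted K dominated]
  have term_Suc: "\<beta> ^ Suc t * Eh P h x (Suc t) (\<phi> (Suc t)) = \<beta> * infsum (a t) UNIV" for t
    unfolding a_def e_def
    by (subst Eh_Suc[OF h]) (rule \<phi>, simp add: infsum_cmult_right')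
  have "(\<Sum>t. \<beta> ^ Suc t * Eh P h x (Suc t) (\<phi> (Suc t))) = \<beta> * (\<Sum>t. infsum (a t) UNIV)"
    unfolding term_Suc by (rule suminf_mult[OF swap(1)])
  also have "\<dots> = \<beta> * infsum (\<lambda>y. \<Sum>t. a t y) UNIV"
    by (simp only: swap(2))
  also have "\<dots> = \<beta> * infsum (\<lambda>y. P ?a x y * disc_sum P \<beta> (tail_policy h x) y (\<lambda>t ys. \<phi> (Suc t) (x # ys))) UNIV"
  proof -
    have "(\<Sum>t. a t y) = P ?a x y * disc_sum P \<beta> (tail_policy h x) y (\<lambda>t ys. \<phi> (Suc t) (x # ys))" for y
    proof -
      have "summable (\<lambda>t. \<beta> ^ t * e t y)"
        unfolding e_def by (rule disc_sum_summable_bound(1)[OF binary_tail_policy[OF h]]) (rule \<phi>)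
      then have "(\<Sum>t. P ?a x y * (\<beta> ^ t * e t y)) = P ?a x y * (\<Sum>t. \<beta> ^ t * e t y)"
        by (rule suminf_mult)
      then show ?thesis
        by (simp add: a_def disc_sum_def e_def mult.left_commute)
    qed
    then show ?thesis by simp
  qed
  finally show ?thesis .
qed

lemma disc_sum_Suc:
  assumes h: "binary_policy h" and \<phi>: "\<And>t xs. \<bar>\<phi> t xs\<bar> \<le> K"
  shows "disc_sum P \<beta> h x \<phi> = \<phi> 0 [x]
     + \<beta> * infsum (\<lambda>y. P (h [x]) x y * disc_sum P \<beta> (tail_policy h x) y (\<lambda>t ys. \<phi> (Suc t) (x # ys))) UNIV"
proof -
  have "summable (\<lambda>t. \<beta> ^ t * Eh P h x t (\<phi> t))"
    by (rule disc_sum_summable_bound(1)[OF h]) (rule \<phi>)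
  from suminf_split_head[OF this]
  have "disc_sum P \<beta> h x \<phi> = \<phi> 0 [x] + (\<Sum>t. \<beta> ^ Suc t * Eh P h x (Suc t) (\<phi> (Suc t)))"
    by (simp add: disc_sum_def Eh_0 del: power_Suc)
  then show ?thesis
    using suminf_Eh_Suc[where \<phi>=\<phi> and K=K and x=x, OF h \<phi>] by simp
qed

definition cost_bound :: "real \<Rightarrow> real" where
  "cost_bound l = cmax + \<bar>l\<bar>"

lemma cost_bound_nonneg: "0 \<le> cost_bound l"
  using cmax_nonneg by (simp add: cost_bound_def)

lemma cl_bound: "a \<le> 1 \<Longrightarrow> \<bar>cl c l x a\<bar> \<le> cost_bound l"
  using cost_bounded[of a x] by (cases a) (auto simp: cl_def cost_bound_def)

lemma Jh_bound:
  assumes "binary_policy h"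
  shows "\<bar>Jh P c \<beta> l h x\<bar> \<le> cost_bound l"
proof -
  have "\<bar>disc_sum P \<beta> h x (\<lambda>t xs. cl c l (last xs) (h xs))\<bar> \<le> cost_bound l / (1 - \<beta>)"
    by (rule disc_sum_summable_bound(2)[OF assms]) (use assms cl_bound in \<open>simp add: binary_policy_def\<close>)
  then have "(1 - \<beta>) * \<bar>disc_sum P \<beta> h x (\<lambda>t xs. cl c l (last xs) (h xs))\<bar>
      \<le> (1 - \<beta>) * (cost_bound l / (1 - \<beta>))"
    by (rule mult_left_mono) (use discount_less_1 in simp)
  then show ?thesis
    using discount_less_1 by (simp add: Jh_eq_disc_sum abs_mult)
qed

lemma Jh_Suc:
  assumes "binary_policy h"
  shows "Jh P c \<beta> l h x = (1 - \<beta>) * cl c l x (h [x])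
     + \<beta> * infsum (\<lambda>y. P (h [x]) x y * Jh P c \<beta> l (tail_policy h x) y) UNIV"
proof -
  define D where "D y = disc_sum P \<beta> (tail_policy h x) y (\<lambda>t ys. cl c l (last (x # ys)) (h (x # ys)))" for y
  have tail: "Jh P c \<beta> l (tail_policy h x) y = (1 - \<beta>) * D y" for y
  proof -
    have "D y = disc_sum P \<beta> (tail_policy h x) y (\<lambda>t ys. cl c l (last ys) (tail_policy h x ys))"
      unfolding D_def by (rule disc_sum_cong) (auto simp: tail_policy_def dest: paths_nonempty_hd)
    then show ?thesis by (simp add: Jh_eq_disc_sum)
  qed
  have step: "Jh P c \<beta> l h x = (1 - \<beta>) * (cl c l x (h [x]) + \<beta> * infsum (\<lambda>y. P (h [x]) x y * D y) UNIV)"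
    unfolding Jh_eq_disc_sum D_def
    by (subst disc_sum_Suc[OF assms]) (use assms cl_bound in \<open>auto simp: binary_policy_def\<close>)
  have tail_sum: "infsum (\<lambda>y. P (h [x]) x y * Jh P c \<beta> l (tail_policy h x) y) UNIV
      = (1 - \<beta>) * infsum (\<lambda>y. P (h [x]) x y * D y) UNIV"
    unfolding tail by (simp add: mult.left_commute infsum_cmult_right')
  show ?thesis
    by (simp only: step tail_sum) (simp add: algebra_simps)
qed

section \<open>The Bellman equation\<close>

definition bellman :: "real \<Rightarrow> ('x \<Rightarrow> real) \<Rightarrow> 'x \<Rightarrow> real" where
  "bellman l V x = min (Hop P c \<beta> l V x 0) (Hop P c \<beta> l V x 1)"

lemma Hop_diff_bound:
  assumes "a \<le> 1" "\<And>y. \<bar>V y\<bar> \<le> K" "\<And>y. \<bar>U y\<bar> \<le> K'" "\<And>y. \<bar>V y - U y\<bar> \<le> D"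
  shows "\<bar>Hop P c \<beta> l V x a - Hop P c \<beta> l U x a\<bar> \<le> \<beta> * D"
proof -
  have "Hop P c \<beta> l V x a - Hop P c \<beta> l U x a = \<beta> * infsum (\<lambda>y. P a x y * (V y - U y)) UNIV"
    by (simp add: Hop_def right_diff_distrib[symmetric] kernel_infsum_diff[OF assms(1-3)])
  moreover have "\<bar>infsum (\<lambda>y. P a x y * (V y - U y)) UNIV\<bar> \<le> D"
    by (rule kernel_infsum_bound[OF assms(1,4)])
  ultimately show ?thesis
    using discount_pos by (simp add: abs_mult mult_left_mono)
qed

lemma Hop_bound:
  assumes "a \<le> 1" "\<And>y. \<bar>V y\<bar> \<le> cost_bound l"
  shows "\<bar>Hop P c \<beta> l V x a\<bar> \<le> cost_bound l"
proof -
  have "\<bar>\<beta> * infsum (\<lambda>y. P a x y * V y) UNIV\<bar> \<le> \<beta> * cost_bound l"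
    using kernel_infsum_bound[OF assms] discount_pos by (simp add: abs_mult mult_left_mono)
  moreover have "\<bar>(1 - \<beta>) * cl c l x a\<bar> \<le> (1 - \<beta>) * cost_bound l"
    using cl_bound[OF assms(1)] discount_less_1 by (simp add: abs_mult mult_left_mono)
  moreover have "\<bar>Hop P c \<beta> l V x a\<bar>
      \<le> \<bar>(1 - \<beta>) * cl c l x a\<bar> + \<bar>\<beta> * infsum (\<lambda>y. P a x y * V y) UNIV\<bar>"
    unfolding Hop_def by (rule abs_triangle_ineq)
  ultimately show ?thesis
    by (simp add: algebra_simps)
qed

lemma bellman_contracting:
  assumes "\<And>y. \<bar>V y\<bar> \<le> K" "\<And>y. \<bar>U y\<bar> \<le> K'" "\<And>y. \<bar>V y - U y\<bar> \<le> D"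
  shows "\<bar>bellman l V x - bellman l U x\<bar> \<le> \<beta> * D"
  unfolding bellman_def by (rule abs_min_diff_le; rule Hop_diff_bound[OF _ assms]; simp)

lemma bellman_bound: "(\<And>y. \<bar>V y\<bar> \<le> cost_bound l) \<Longrightarrow> \<bar>bellman l V x\<bar> \<le> cost_bound l"
  unfolding bellman_def using Hop_bound[of 0 V l x] Hop_bound[of 1 V l x]
  by (simp add: abs_le_iff min_def)

lemma bellman_fixpoint_unique:
  assumes "\<And>x. \<bar>U x\<bar> \<le> K" "\<And>x. bellman l U x = U x"
    and "\<And>x. \<bar>U' x\<bar> \<le> K'" "\<And>x. bellman l U' x = U' x"
  shows "U = U'"
proof
  fix x
  have "U x - U' x = 0"
  proof (rule contraction_imp_zero[where D="\<lambda>x. U x - U' x" and S=UNIV and K="K + K'"])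
    show "\<bar>U y - U' y\<bar> \<le> K + K'" for y
      using abs_triangle_ineq4[of "U y" "U' y"] assms(1,3)[of y] by simp
    show "\<bar>U y - U' y\<bar> \<le> \<beta> * D" if "\<And>y. y \<in> UNIV \<Longrightarrow> \<bar>U y - U' y\<bar> \<le> D" for D y
    proof -
      have "\<And>y. \<bar>U y - U' y\<bar> \<le> D" using that by simp
      from bellman_contracting[where V=U and U=U' and l=l and x=y, OF assms(1,3) this]
      show ?thesis using assms(2,4) by simp
    qed
  qed (use discount_pos discount_less_1 in auto)
  then show "U x = U' x" by simp
qed

lemma Vf_bounded_fixpoint:
  "(\<forall>x. \<bar>Vf P c \<beta> l x\<bar> \<le> cost_bound l) \<and> (\<forall>x. bellman l (Vf P c \<beta> l) x = Vf P c \<beta> l x)"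
proof -
  obtain W where W: "\<And>x. \<bar>W x\<bar> \<le> cost_bound l" "\<And>x. bellman l W x = W x"
    using bounded_contraction_fixpoint[where T="bellman l"] bellman_bound bellman_contracting
      discount_pos discount_less_1 cost_bound_nonneg by (metis less_imp_le)
  have "Vf P c \<beta> l = W"
    unfolding Vf_def
  proof (rule the_equality)
    show "(\<exists>B. \<forall>x. \<bar>W x\<bar> \<le> B) \<and> (\<forall>x. W x = min (Hop P c \<beta> l W x 0) (Hop P c \<beta> l W x 1))"
      using W by (metis bellman_def)
    show "V = W" if "(\<exists>B. \<forall>x. \<bar>V x\<bar> \<le> B) \<and> (\<forall>x. V x = min (Hop P c \<beta> l V x 0) (Hop P c \<beta> l V x 1))" for V
      using that bellman_fixpoint_unique[OF _ _ W] by (metis bellman_def)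
  qed
  then show ?thesis using W by simp
qed

lemma Vf_bound: "\<bar>Vf P c \<beta> l x\<bar> \<le> cost_bound l"
  using Vf_bounded_fixpoint by blast

lemma Vf_eq_min_Hf: "Vf P c \<beta> l x = min (Hf P c \<beta> l x 0) (Hf P c \<beta> l x 1)"
  using Vf_bounded_fixpoint unfolding bellman_def Hf_def by metis

lemma Hf_eq: "Hf P c \<beta> l x a = (1 - \<beta>) * cl c l x a + \<beta> * infsum (\<lambda>y. P a x y * Vf P c \<beta> l y) UNIV"
  by (simp add: Hf_def Hop_def)

lemma gf_le_1: "gf P c \<beta> l x \<le> 1"
  by (simp add: gf_def)

lemma Vf_eq_Hf_gf: "Vf P c \<beta> l x = Hf P c \<beta> l x (gf P c \<beta> l x)"
  using Vf_eq_min_Hf[of l x] by (simp add: gf_def min_def)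

lemma Vf_le_Hf: "a \<le> 1 \<Longrightarrow> Vf P c \<beta> l x \<le> Hf P c \<beta> l x a"
  using Vf_eq_min_Hf[of l x] by (cases a) auto

definition greedy_policy :: "real \<Rightarrow> 'x list \<Rightarrow> nat" where
  "greedy_policy l xs = gf P c \<beta> l (last xs)"

lemma binary_greedy_policy: "binary_policy (greedy_policy l)"
  by (simp add: binary_policy_def greedy_policy_def gf_def)

lemma abs_Jh_minus_Vf_le:
  assumes "binary_policy h"
  shows "\<bar>Jh P c \<beta> l h x - Vf P c \<beta> l x\<bar> \<le> 2 * cost_bound l"
  using abs_triangle_ineq4[of "Jh P c \<beta> l h x" "Vf P c \<beta> l x"] Jh_bound[OF assms, of l x] Vf_bound[of l x]
  by simp

lemma Jh_greedy_policy: "Jh P c \<beta> l (greedy_policy l) x = Vf P c \<beta> l x"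
proof -
  let ?J = "Jh P c \<beta> l (greedy_policy l)" and ?V = "Vf P c \<beta> l"
  have J_bound: "\<bar>?J y\<bar> \<le> cost_bound l" for y
    by (rule Jh_bound[OF binary_greedy_policy])
  have step: "?J y - ?V y = \<beta> * infsum (\<lambda>z. P (gf P c \<beta> l y) y z * (?J z - ?V z)) UNIV" for y
  proof -
    have "Jh P c \<beta> l (tail_policy (greedy_policy l) y) z = ?J z" for z
      by (rule Jh_cong) (simp add: tail_policy_def greedy_policy_def)
    then have "?J y = (1 - \<beta>) * cl c l y (gf P c \<beta> l y) + \<beta> * infsum (\<lambda>z. P (gf P c \<beta> l y) y z * ?J z) UNIV"
      using Jh_Suc[OF binary_greedy_policy, where l=l and x=y] by (simp add: greedy_policy_def)
    moreover have "?V y = (1 - \<beta>) * cl c l y (gf P c \<beta> l y) + \<beta> * infsum (\<lambda>z. P (gf P c \<beta> l y) y z * ?V z) UNIV"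
      using Vf_eq_Hf_gf[of l y] by (simp add: Hf_eq)
    ultimately show ?thesis
      using kernel_infsum_diff[OF gf_le_1 J_bound Vf_bound] by (simp add: right_diff_distrib[symmetric])
  qed
  have "?J x - ?V x = 0"
  proof (rule contraction_imp_zero[where D="\<lambda>y. ?J y - ?V y" and S=UNIV and K="2 * cost_bound l"])
    show "\<bar>?J y - ?V y\<bar> \<le> 2 * cost_bound l" for y
      by (rule abs_Jh_minus_Vf_le[OF binary_greedy_policy])
    show "\<bar>?J y - ?V y\<bar> \<le> \<beta> * D" if "\<And>z. z \<in> UNIV \<Longrightarrow> \<bar>?J z - ?V z\<bar> \<le> D" for D y
      unfolding step[of y] using kernel_infsum_bound[OF gf_le_1, of "\<lambda>z. ?J z - ?V z" D] that discount_pos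
      by (simp add: abs_mult mult_left_mono)
  qed (use discount_pos discount_less_1 in auto)
  then show ?thesis by simp
qed

lemma Jh_minus_Vf_ge_step:
  assumes h: "binary_policy h"
  shows "\<beta> * infsum (\<lambda>y. P (h [x]) x y * (Jh P c \<beta> l (tail_policy h x) y - Vf P c \<beta> l y)) UNIV
    \<le> Jh P c \<beta> l h x - Vf P c \<beta> l x"
proof -
  have act: "h [x] \<le> 1"
    using h by (simp add: binary_policy_def)
  have "Vf P c \<beta> l x \<le> (1 - \<beta>) * cl c l x (h [x]) + \<beta> * infsum (\<lambda>y. P (h [x]) x y * Vf P c \<beta> l y) UNIV"
    using Vf_le_Hf[OF act, of l x] by (simp add: Hf_eq)
  then show ?thesis
    using Jh_Suc[OF h, where l=l and x=x]
      kernel_infsum_diff[OF act Jh_bound[OF binary_tail_policy[OF h]] Vf_bound, symmetric]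
    by (simp add: right_diff_distrib)
qed

lemma Vf_le_Jh:
  assumes "binary_policy h"
  shows "Vf P c \<beta> l x \<le> Jh P c \<beta> l h x"
proof -
  define D where "D = (\<lambda>(h, x). Jh P c \<beta> l h x - Vf P c \<beta> l x)"
  have "0 \<le> D (h, x)"
  proof (rule contraction_imp_nonneg[where S="{(h, x). binary_policy h}" and K="2 * cost_bound l"])
    show "- (2 * cost_bound l) \<le> D p" if p: "p \<in> {(h, x). binary_policy h}" for p
    proof -
      obtain h x where "p = (h, x)" "binary_policy h" using p by auto
      then show ?thesis using abs_le_D2[OF abs_Jh_minus_Vf_le[of h l x]] by (simp add: D_def)
    qed
    show "- (\<beta> * K) \<le> D p"
      if bound: "\<And>q. q \<in> {(h, x). binary_policy h} \<Longrightarrow> - K \<le> D q"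
        and "p \<in> {(h, x). binary_policy h}" for K p
    proof -
      obtain h x where p: "p = (h, x)" "binary_policy h" using \<open>p \<in> _\<close> by auto
      have tail: "binary_policy (tail_policy h x)"
        by (rule binary_tail_policy[OF p(2)])
      have "- K \<le> infsum (\<lambda>y. P (h [x]) x y * (Jh P c \<beta> l (tail_policy h x) y - Vf P c \<beta> l y)) UNIV"
      proof (rule kernel_infsum_lower[where K'="2 * cost_bound l"])
        show "h [x] \<le> 1" using p(2) by (simp add: binary_policy_def)
        show "- K \<le> Jh P c \<beta> l (tail_policy h x) y - Vf P c \<beta> l y" for y
          using bound[of "(tail_policy h x, y)"] tail by (simp add: D_def)
        show "\<bar>Jh P c \<beta> l (tail_policy h x) y - Vf P c \<beta> l y\<bar> \<le> 2 * cost_bound l" for y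
          by (rule abs_Jh_minus_Vf_le[OF tail])
      qed
      then have "\<beta> * - K \<le> \<beta> * infsum (\<lambda>y. P (h [x]) x y * (Jh P c \<beta> l (tail_policy h x) y - Vf P c \<beta> l y)) UNIV"
        by (rule mult_left_mono) (use discount_pos in simp)
      then show ?thesis
        using Jh_minus_Vf_ge_step[OF p(2), where l=l and x=x] p(1) by (simp add: D_def)
    qed
  qed (use assms discount_pos discount_less_1 in auto)
  then show ?thesis by (simp add: D_def)
qed

end

section \<open>Stopping-time policies\<close>

definition cons_path :: "'x \<Rightarrow> (nat \<Rightarrow> 'x) \<Rightarrow> nat \<Rightarrow> 'x" where
  "cons_path x \<omega> i = (case i of 0 \<Rightarrow> x | Suc j \<Rightarrow> \<omega> j)"

text \<open>It is only used when \<open>\<sigma>\<close>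
  does not stop at time 0 on paths from \<open>x\<close>: \<open>enat\<close> subtraction truncates at 0.\<close>

definition tail_stop :: "((nat \<Rightarrow> 'x) \<Rightarrow> enat) \<Rightarrow> 'x \<Rightarrow> (nat \<Rightarrow> 'x) \<Rightarrow> enat" where
  "tail_stop \<sigma> x \<omega> = \<sigma> (cons_path x \<omega>) - 1"

lemma ext_singleton: "ext [x] = (\<lambda>_. x)"
  by (simp add: ext_def fun_eq_iff)

lemma ext_Cons_length: "ys \<noteq> [] \<Longrightarrow> ext (x # ys) (length ys) = last ys"
  by (simp add: ext_def last_conv_nth)

lemma ext_Cons: "ys \<noteq> [] \<Longrightarrow> ext (x # ys) = cons_path x (ext ys)"
  by (cases ys) (auto simp: ext_def cons_path_def fun_eq_iff split: nat.split)

lemma enat_minus_1_eq: "s - 1 = enat n \<longleftrightarrow> s = enat (Suc n) \<or> (n = 0 \<and> s = 0)"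
  by (cases s) (auto simp: one_enat_def zero_enat_def)

lemma enat_Suc_less_iff: "s \<noteq> 0 \<Longrightarrow> enat (Suc t) < s \<longleftrightarrow> enat t < s - 1"
  by (cases s) (auto simp: one_enat_def zero_enat_def)

lemma enat_eq_Suc_iff: "s \<noteq> 0 \<Longrightarrow> s = enat (Suc t) \<longleftrightarrow> s - 1 = enat t"
  by (cases s) (auto simp: one_enat_def zero_enat_def)

lemma stopping_time_zero_iff:
  assumes "stopping_time \<sigma>" "\<omega> 0 = \<omega>' 0"
  shows "\<sigma> \<omega> = 0 \<longleftrightarrow> \<sigma> \<omega>' = 0"
  using assms unfolding stopping_time_def zero_enat_def by (metis le_zero_eq)

lemma stopping_time_tail_stop:
  fixes \<sigma> :: "(nat \<Rightarrow> 'x) \<Rightarrow> enat"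
  assumes "stopping_time \<sigma>"
  shows "stopping_time (tail_stop \<sigma> x)"
  unfolding stopping_time_def
proof (intro allI impI)
  fix n and \<omega> \<omega>' :: "nat \<Rightarrow> 'x"
  assume "\<forall>i\<le>n. \<omega> i = \<omega>' i"
  then have "\<forall>i\<le>Suc n. cons_path x \<omega> i = cons_path x \<omega>' i"
    by (auto simp: cons_path_def split: nat.splits)
  then have "\<sigma> (cons_path x \<omega>) = enat (Suc n) \<longleftrightarrow> \<sigma> (cons_path x \<omega>') = enat (Suc n)"
    using assms unfolding stopping_time_def by blast
  moreover have "\<sigma> (cons_path x \<omega>) = 0 \<longleftrightarrow> \<sigma> (cons_path x \<omega>') = 0"
    by (rule stopping_time_zero_iff[OF assms]) (simp add: cons_path_def)
  ultimately show "tail_stop \<sigma> x \<omega> = enat n \<longleftrightarrow> tail_stop \<sigma> x \<omega>' = enat n"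
    unfolding tail_stop_def enat_minus_1_eq by blast
qed

lemma tail_policy_h_stop:
  assumes "stopping_time \<sigma>" "\<sigma> (\<lambda>_. x) \<noteq> 0" "ys \<noteq> []"
  shows "tail_policy (h_stop P c \<beta> l \<sigma>) x ys = h_stop P c \<beta> l (tail_stop \<sigma> x) ys"
proof -
  have "\<sigma> (cons_path x (ext ys)) \<noteq> 0"
    using assms(2) stopping_time_zero_iff[OF assms(1), of "cons_path x (ext ys)" "\<lambda>_. x"]
    by (simp add: cons_path_def)
  moreover obtain m where "length ys = Suc m" using assms(3) by (cases ys) auto
  ultimately show ?thesis
    using assms(3) enat_Suc_less_iff enat_eq_Suc_iff
    by (simp add: tail_policy_def h_stop_def ext_Cons tail_stop_def)
qed

lemma tail_policy_h_stop_zero: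
  assumes "stopping_time \<sigma>" "\<sigma> (\<lambda>_. x) = 0" "ys \<noteq> []"
  shows "tail_policy (h_stop P c \<beta> l \<sigma>) x ys = gf P c \<beta> l (last ys)"
proof -
  have "\<sigma> (ext (x # ys)) = 0"
    using assms(2) stopping_time_zero_iff[OF assms(1), of "ext (x # ys)" "\<lambda>_. x"] by (simp add: ext_def)
  then show ?thesis
    using assms(3) by (simp add: tail_policy_def h_stop_def zero_enat_def)
qed

context discounted_bandit
begin

lemma binary_h_stop: "binary_policy (h_stop P c \<beta> l \<sigma>)"
  by (simp add: binary_policy_def h_stop_def gf_def)

lemma Hf_1_eq: "Hf P c \<beta> l x 1 = (1 - \<beta>) * c x 1 + Wf P c \<beta> l x"
  by (simp add: Hf_eq Wf_def cl_def algebra_simps)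

lemma Jh_h_stop_zero:
  assumes "stopping_time \<sigma>" "\<sigma> (\<lambda>_. x) = 0"
  shows "Jh P c \<beta> l (h_stop P c \<beta> l \<sigma>) x = Hf P c \<beta> l x 1"
proof -
  have "Jh P c \<beta> l (tail_policy (h_stop P c \<beta> l \<sigma>) x) y = Jh P c \<beta> l (greedy_policy l) y" for y
    by (rule Jh_cong) (simp add: tail_policy_h_stop_zero[OF assms] greedy_policy_def)
  moreover have "h_stop P c \<beta> l \<sigma> [x] = 1"
    using assms(2) by (simp add: h_stop_def ext_singleton zero_enat_def)
  ultimately show ?thesis
    using Jh_Suc[OF binary_h_stop, where l=l and x=x] by (simp add: Jh_greedy_policy Hf_eq)
qed

lemma Jh_h_stop_Suc:
  assumes "stopping_time \<sigma>" "\<sigma> (\<lambda>_. x) \<noteq> 0"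
  shows "Jh P c \<beta> l (h_stop P c \<beta> l \<sigma>) x = (1 - \<beta>) * c x 0
     + \<beta> * infsum (\<lambda>y. P 0 x y * Jh P c \<beta> l (h_stop P c \<beta> l (tail_stop \<sigma> x)) y) UNIV"
proof -
  have "Jh P c \<beta> l (tail_policy (h_stop P c \<beta> l \<sigma>) x) y = Jh P c \<beta> l (h_stop P c \<beta> l (tail_stop \<sigma> x)) y" for y
    by (rule Jh_cong) (simp add: tail_policy_h_stop[OF assms])
  moreover have "h_stop P c \<beta> l \<sigma> [x] = 0"
    using assms(2) by (simp add: h_stop_def ext_singleton zero_enat_def[symmetric])
  ultimately show ?thesis
    using Jh_Suc[OF binary_h_stop, where l=l and x=x] by (simp add: cl_def)
qed

text \<open>Stopping at the first time \<open>t \<ge> 1\<close> at which the greedy policy acts turns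
  \<open>h_stop\<close> into the policy that is passive now and greedy afterwards.\<close>

definition first_active_time :: "real \<Rightarrow> (nat \<Rightarrow> 'x) \<Rightarrow> enat" where
  "first_active_time l \<omega> = (if \<exists>t\<ge>1. gf P c \<beta> l (\<omega> t) = 1
     then enat (LEAST t. 1 \<le> t \<and> gf P c \<beta> l (\<omega> t) = 1) else \<infinity>)"

lemma first_active_time_eq_iff:
  "first_active_time l \<omega> = enat n \<longleftrightarrow>
     1 \<le> n \<and> gf P c \<beta> l (\<omega> n) = 1 \<and> (\<forall>t. 1 \<le> t \<and> t < n \<longrightarrow> gf P c \<beta> l (\<omega> t) \<noteq> 1)"
  (is "?L \<longleftrightarrow> ?R")
proof
  assume ?L
  then have ex: "\<exists>t\<ge>1. gf P c \<beta> l (\<omega> t) = 1" and n: "n = (LEAST t. 1 \<le> t \<and> gf P c \<beta> l (\<omega> t) = 1)"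
    by (auto simp: first_active_time_def split: if_splits)
  have "1 \<le> n \<and> gf P c \<beta> l (\<omega> n) = 1"
    unfolding n by (rule LeastI_ex) (use ex in auto)
  moreover have "\<forall>t. 1 \<le> t \<and> t < n \<longrightarrow> gf P c \<beta> l (\<omega> t) \<noteq> 1"
    unfolding n using not_less_Least by blast
  ultimately show ?R by blast
next
  assume R: ?R
  then have "(LEAST t. 1 \<le> t \<and> gf P c \<beta> l (\<omega> t) = 1) = n"
    by (intro Least_equality) (auto simp: not_less[symmetric])
  then show ?L
    using R by (auto simp: first_active_time_def)
qed

lemma first_active_time_le:
  assumes "1 \<le> n" "gf P c \<beta> l (\<omega> n) = 1"
  shows "first_active_time l \<omega> \<le> enat n"
proof -
  have "(LEAST t. 1 \<le> t \<and> gf P c \<beta> l (\<omega> t) = 1) \<le> n"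
    by (rule Least_le) (use assms in simp)
  then show ?thesis
    using assms by (auto simp: first_active_time_def)
qed

lemma stopping_time_first_active_time: "stopping_time (first_active_time l)"
  unfolding stopping_time_def first_active_time_eq_iff by (metis less_imp_le_nat order_refl)

lemma first_active_time_nonzero: "first_active_time l \<omega> \<noteq> 0"
  using first_active_time_eq_iff[of l \<omega> 0] by (simp add: zero_enat_def)

lemma tail_policy_h_stop_first_active_time:
  assumes "ys \<noteq> []"
  shows "tail_policy (h_stop P c \<beta> l (first_active_time l)) x ys = gf P c \<beta> l (last ys)"
proof -
  let ?\<tau> = "first_active_time l (ext (x # ys))" and ?m = "length ys"
  have last: "ext (x # ys) ?m = last ys"
    by (rule ext_Cons_length[OF assms])
  have "gf P c \<beta> l (last ys) = 0" if "enat ?m < ?\<tau>"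
  proof -
    have "gf P c \<beta> l (last ys) \<noteq> 1"
      using first_active_time_le[of ?m l "ext (x # ys)"] that assms last by (auto simp: Suc_le_eq)
    then show ?thesis by (simp add: gf_def split: if_splits)
  qed
  moreover have "gf P c \<beta> l (last ys) = 1" if "?\<tau> = enat ?m"
    using that last first_active_time_eq_iff by metis
  ultimately show ?thesis
    using assms by (simp add: tail_policy_def h_stop_def)
qed

lemma Jh_h_stop_first_active_time:
  "Jh P c \<beta> l (h_stop P c \<beta> l (first_active_time l)) x = Hf P c \<beta> l x 0"
proof -
  have "Jh P c \<beta> l (tail_policy (h_stop P c \<beta> l (first_active_time l)) x) y = Jh P c \<beta> l (greedy_policy l) y" for y
    by (rule Jh_cong) (simp add: tail_policy_h_stop_first_active_time greedy_policy_def)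
  moreover have "h_stop P c \<beta> l (first_active_time l) [x] = 0"
    using first_active_time_nonzero[of l "\<lambda>_. x"] by (simp add: h_stop_def ext_singleton zero_enat_def[symmetric])
  ultimately show ?thesis
    using Jh_Suc[OF binary_h_stop, where l=l and x=x] by (simp add: Jh_greedy_policy Hf_eq)
qed

end

section \<open>Stopped costs under passive actions\<close>

definition run_cost :: "('x \<Rightarrow> nat \<Rightarrow> real) \<Rightarrow> ((nat \<Rightarrow> 'x) \<Rightarrow> enat) \<Rightarrow> nat \<Rightarrow> 'x list \<Rightarrow> real" where
  "run_cost c \<sigma> t xs = (if enat t < \<sigma> (ext xs) then c (last xs) 0 else 0)"

definition stop_payoff :: "('x \<Rightarrow> real) \<Rightarrow> ((nat \<Rightarrow> 'x) \<Rightarrow> enat) \<Rightarrow> nat \<Rightarrow> 'x list \<Rightarrow> real" where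
  "stop_payoff f \<sigma> t xs = (if \<sigma> (ext xs) = enat t then f (last xs) else 0)"

lemma Lf_eq_disc_sum:
  "Lf P c \<beta> x \<sigma>
     = disc_sum P \<beta> passive_pol x (run_cost c \<sigma>) + disc_sum P \<beta> passive_pol x (stop_payoff (\<lambda>y. c y 1) \<sigma>)"
  unfolding Lf_def disc_sum_def run_cost_def[abs_def] stop_payoff_def[abs_def] ..

lemma Estop_eq_disc_sum: "Estop P \<beta> x \<sigma> f = disc_sum P \<beta> passive_pol x (stop_payoff f \<sigma>)"
  unfolding Estop_def disc_sum_def stop_payoff_def[abs_def] ..

lemma binary_passive_pol: "binary_policy passive_pol"
  by (simp add: binary_policy_def passive_pol_def)

lemma tail_passive_pol: "tail_policy passive_pol x = passive_pol"
  by (simp add: tail_policy_def passive_pol_def fun_eq_iff)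

lemma disc_sum_zero: "disc_sum P \<beta> h x (\<lambda>_ _. 0) = 0"
  by (simp add: disc_sum_def Eh_def)

context discounted_bandit
begin

lemma abs_one_minus_discount_mult_le: "\<bar>r\<bar> \<le> K \<Longrightarrow> \<bar>(1 - \<beta>) * r\<bar> \<le> K"
  using mult_left_le_one_le[of "\<bar>r\<bar>" "1 - \<beta>"] discount_pos discount_less_1 by (simp add: abs_mult)

lemma Wf_bound: "\<bar>Wf P c \<beta> l x\<bar> \<le> cost_bound l"
proof -
  have "\<bar>\<beta> * infsum (\<lambda>y. P 1 x y * Vf P c \<beta> l y) UNIV\<bar> \<le> \<beta> * cost_bound l"
    using kernel_infsum_bound[of 1 "Vf P c \<beta> l", OF _ Vf_bound] discount_pos
    by (simp add: abs_mult mult_left_mono)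
  moreover have "\<bar>(1 - \<beta>) * l\<bar> \<le> (1 - \<beta>) * cost_bound l"
    using discount_less_1 cmax_nonneg by (simp add: abs_mult cost_bound_def mult_left_mono)
  moreover have "\<bar>Wf P c \<beta> l x\<bar> \<le> \<bar>(1 - \<beta>) * l\<bar> + \<bar>\<beta> * infsum (\<lambda>y. P 1 x y * Vf P c \<beta> l y) UNIV\<bar>"
    unfolding Wf_def by (rule abs_triangle_ineq)
  ultimately show ?thesis
    by (simp add: algebra_simps)
qed

definition stop_reward :: "real \<Rightarrow> ((nat \<Rightarrow> 'x) \<Rightarrow> enat) \<Rightarrow> nat \<Rightarrow> 'x list \<Rightarrow> real" where
  "stop_reward l \<sigma> t xs =
     (1 - \<beta>) * run_cost c \<sigma> t xs + stop_payoff (\<lambda>y. (1 - \<beta>) * c y 1 + Wf P c \<beta> l y) \<sigma> t xs"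

definition stop_value :: "real \<Rightarrow> 'x \<Rightarrow> ((nat \<Rightarrow> 'x) \<Rightarrow> enat) \<Rightarrow> real" where
  "stop_value l x \<sigma> = disc_sum P \<beta> passive_pol x (stop_reward l \<sigma>)"

lemma run_cost_bound: "\<bar>run_cost c \<sigma> t xs\<bar> \<le> cmax"
  using cost_bounded[of 0] cmax_nonneg by (simp add: run_cost_def)

lemma stop_payoff_bound: "(\<And>y. \<bar>f y\<bar> \<le> K) \<Longrightarrow> 0 \<le> K \<Longrightarrow> \<bar>stop_payoff f \<sigma> t xs\<bar> \<le> K"
  by (simp add: stop_payoff_def)

lemma stop_payoff_cost_bound: "\<bar>stop_payoff (\<lambda>y. c y 1) \<sigma> t xs\<bar> \<le> cmax"
  by (rule stop_payoff_bound) (use cost_bounded cmax_nonneg in auto)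

lemma stop_payoff_Wf_bound: "\<bar>stop_payoff (Wf P c \<beta> l) \<sigma> t xs\<bar> \<le> cost_bound l"
  by (rule stop_payoff_bound) (use Wf_bound cost_bound_nonneg in auto)

lemma stop_reward_bound: "\<bar>stop_reward l \<sigma> t xs\<bar> \<le> cmax + (cmax + cost_bound l)"
proof -
  have "\<bar>(1 - \<beta>) * c y 1 + Wf P c \<beta> l y\<bar> \<le> cmax + cost_bound l" for y
    using abs_one_minus_discount_mult_le[OF cost_bounded[of 1 y]] Wf_bound[of l y] by (simp add: abs_le_iff)
  then have "\<bar>stop_payoff (\<lambda>y. (1 - \<beta>) * c y 1 + Wf P c \<beta> l y) \<sigma> t xs\<bar> \<le> cmax + cost_bound l"
    by (rule stop_payoff_bound) (use cmax_nonneg cost_bound_nonneg in simp)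
  then show ?thesis
    using abs_one_minus_discount_mult_le[OF run_cost_bound[of \<sigma> t xs]] unfolding stop_reward_def
    by (simp add: abs_le_iff)
qed

lemma stop_value_eq: "(1 - \<beta>) * Lf P c \<beta> x \<sigma> + Estop P \<beta> x \<sigma> (Wf P c \<beta> l) = stop_value l x \<sigma>"
proof -
  let ?\<psi> = "\<lambda>t xs. (1 - \<beta>) * stop_payoff (\<lambda>y. c y 1) \<sigma> t xs + stop_payoff (Wf P c \<beta> l) \<sigma> t xs"
  have \<psi>_bound: "\<bar>?\<psi> t xs\<bar> \<le> cmax + cost_bound l" for t xs
    using abs_one_minus_discount_mult_le[OF stop_payoff_cost_bound[of \<sigma> t xs]] stop_payoff_Wf_bound[of l \<sigma> t xs]
    by (simp add: abs_le_iff)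
  have "stop_value l x \<sigma> = disc_sum P \<beta> passive_pol x (\<lambda>t xs. (1 - \<beta>) * run_cost c \<sigma> t xs + ?\<psi> t xs)"
    unfolding stop_value_def stop_reward_def
    by (rule arg_cong[where f="disc_sum P \<beta> passive_pol x"]) (simp add: fun_eq_iff stop_payoff_def)
  also have "\<dots> = (1 - \<beta>) * disc_sum P \<beta> passive_pol x (run_cost c \<sigma>) + disc_sum P \<beta> passive_pol x ?\<psi>"
    by (rule disc_sum_linear[OF binary_passive_pol]) (rule run_cost_bound, rule \<psi>_bound)
  also have "disc_sum P \<beta> passive_pol x ?\<psi>
      = (1 - \<beta>) * disc_sum P \<beta> passive_pol x (stop_payoff (\<lambda>y. c y 1) \<sigma>)
        + disc_sum P \<beta> passive_pol x (stop_payoff (Wf P c \<beta> l) \<sigma>)"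
    by (rule disc_sum_linear[OF binary_passive_pol]) (rule stop_payoff_cost_bound, rule stop_payoff_Wf_bound)
  finally show ?thesis
    unfolding Lf_eq_disc_sum Estop_eq_disc_sum by (simp add: algebra_simps)
qed

lemma disc_sum_passive_Suc:
  assumes "\<And>t xs. \<bar>\<phi> t xs\<bar> \<le> K"
  shows "disc_sum P \<beta> passive_pol x \<phi> = \<phi> 0 [x]
     + \<beta> * infsum (\<lambda>y. P 0 x y * disc_sum P \<beta> passive_pol y (\<lambda>t ys. \<phi> (Suc t) (x # ys))) UNIV"
  using disc_sum_Suc[where h=passive_pol and \<phi>=\<phi> and K=K and x=x, OF binary_passive_pol assms]
  by (simp add: tail_passive_pol passive_pol_def)

lemma stop_value_zero:
  assumes "stopping_time \<sigma>" "\<sigma> (\<lambda>_. x) = 0"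
  shows "stop_value l x \<sigma> = (1 - \<beta>) * c x 1 + Wf P c \<beta> l x"
proof -
  have "\<sigma> (ext (x # ys)) = 0" for ys
    using stopping_time_zero_iff[OF assms(1), of "ext (x # ys)" "\<lambda>_. x"] assms(2) by (simp add: ext_def)
  then have tail: "stop_reward l \<sigma> (Suc t) (x # ys) = 0" for t ys
    by (simp add: stop_reward_def run_cost_def stop_payoff_def zero_enat_def)
  have "stop_reward l \<sigma> 0 [x] = (1 - \<beta>) * c x 1 + Wf P c \<beta> l x"
    using assms(2) by (simp add: stop_reward_def run_cost_def stop_payoff_def ext_singleton zero_enat_def)
  moreover have "stop_value l x \<sigma> = stop_reward l \<sigma> 0 [x]
      + \<beta> * infsum (\<lambda>y. P 0 x y * disc_sum P \<beta> passive_pol y (\<lambda>t ys. stop_reward l \<sigma> (Suc t) (x # ys))) UNIV"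
    unfolding stop_value_def by (rule disc_sum_passive_Suc) (rule stop_reward_bound)
  ultimately show ?thesis
    by (simp add: tail disc_sum_zero)
qed

lemma stop_value_Suc:
  assumes "stopping_time \<sigma>" "\<sigma> (\<lambda>_. x) \<noteq> 0"
  shows "stop_value l x \<sigma> = (1 - \<beta>) * c x 0
     + \<beta> * infsum (\<lambda>y. P 0 x y * stop_value l y (tail_stop \<sigma> x)) UNIV"
proof -
  have tail: "stop_reward l \<sigma> (Suc t) (x # ys) = stop_reward l (tail_stop \<sigma> x) t ys" if "ys \<noteq> []" for t ys
  proof -
    have "\<sigma> (cons_path x (ext ys)) \<noteq> 0"
      using stopping_time_zero_iff[OF assms(1), of "cons_path x (ext ys)" "\<lambda>_. x"] assms(2)
      by (simp add: cons_path_def)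
    then show ?thesis
      using that enat_Suc_less_iff enat_eq_Suc_iff
      by (simp add: stop_reward_def run_cost_def stop_payoff_def ext_Cons tail_stop_def)
  qed
  have tail_value: "disc_sum P \<beta> passive_pol y (\<lambda>t ys. stop_reward l \<sigma> (Suc t) (x # ys))
      = stop_value l y (tail_stop \<sigma> x)" for y
    unfolding stop_value_def by (rule disc_sum_cong) (auto simp: tail dest: paths_nonempty_hd)
  have head: "stop_reward l \<sigma> 0 [x] = (1 - \<beta>) * c x 0"
    using assms(2) by (simp add: stop_reward_def run_cost_def stop_payoff_def ext_singleton
        zero_enat_def[symmetric] not_gr_zero)
  have "stop_value l x \<sigma> = stop_reward l \<sigma> 0 [x]
      + \<beta> * infsum (\<lambda>y. P 0 x y * disc_sum P \<beta> passive_pol y (\<lambda>t ys. stop_reward l \<sigma> (Suc t) (x # ys))) UNIV"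
    unfolding stop_value_def by (rule disc_sum_passive_Suc) (rule stop_reward_bound)
  then show ?thesis
    unfolding head tail_value .
qed

lemma stop_value_bound: "\<bar>stop_value l x \<sigma>\<bar> \<le> (cmax + (cmax + cost_bound l)) / (1 - \<beta>)"
  unfolding stop_value_def by (rule disc_sum_summable_bound(2)[OF binary_passive_pol]) (rule stop_reward_bound)

lemma Jh_h_stop_minus_stop_value_Suc:
  assumes "stopping_time \<sigma>" "\<sigma> (\<lambda>_. x) \<noteq> 0"
  shows "Jh P c \<beta> l (h_stop P c \<beta> l \<sigma>) x - stop_value l x \<sigma>
    = \<beta> * infsum (\<lambda>y. P 0 x y * (Jh P c \<beta> l (h_stop P c \<beta> l (tail_stop \<sigma> x)) y
        - stop_value l y (tail_stop \<sigma> x))) UNIV"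
  using Jh_h_stop_Suc[OF assms, of l] stop_value_Suc[OF assms, of l]
    kernel_infsum_diff[OF _ Jh_bound[OF binary_h_stop] stop_value_bound, of 0, symmetric]
  by (simp add: right_diff_distrib)

lemma Jh_h_stop_eq_stop_value:
  assumes "stopping_time \<sigma>"
  shows "Jh P c \<beta> l (h_stop P c \<beta> l \<sigma>) x = stop_value l x \<sigma>"
proof -
  define D where "D = (\<lambda>(x, \<sigma>). Jh P c \<beta> l (h_stop P c \<beta> l \<sigma>) x - stop_value l x \<sigma>)"
  define K where "K = cost_bound l + (cmax + (cmax + cost_bound l)) / (1 - \<beta>)"
  have "D (x, \<sigma>) = 0"
  proof (rule contraction_imp_zero[where S="{(x, \<sigma>). stopping_time \<sigma>}" and K=K])
    show "\<bar>D p\<bar> \<le> K" for p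
      using abs_triangle_ineq4[of "Jh P c \<beta> l (h_stop P c \<beta> l (snd p)) (fst p)" "stop_value l (fst p) (snd p)"]
        Jh_bound[OF binary_h_stop[of l "snd p"], of l "fst p"] stop_value_bound[of l "fst p" "snd p"]
      by (simp add: D_def K_def split_beta)
    show "\<bar>D p\<bar> \<le> \<beta> * K'"
      if bound: "\<And>q. q \<in> {(x, \<sigma>). stopping_time \<sigma>} \<Longrightarrow> \<bar>D q\<bar> \<le> K'"
        and "p \<in> {(x, \<sigma>). stopping_time \<sigma>}" for K' p
    proof -
      obtain y \<tau> where p: "p = (y, \<tau>)" "stopping_time \<tau>" using \<open>p \<in> _\<close> by auto
      show ?thesis
      proof (cases "\<tau> (\<lambda>_. y) = 0")
        case True
        then have "D p = 0"
          using Jh_h_stop_zero[OF p(2) True] stop_value_zero[OF p(2) True] Hf_1_eq[of l y]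
          by (simp add: D_def p(1))
        then show ?thesis
          using bound[of p] \<open>p \<in> _\<close> discount_pos by simp
      next
        case False
        have "\<bar>infsum (\<lambda>z. P 0 y z * D (z, tail_stop \<tau> y)) UNIV\<bar> \<le> K'"
          by (rule kernel_infsum_bound) (use bound stopping_time_tail_stop[OF p(2)] in auto)
        then show ?thesis
          using Jh_h_stop_minus_stop_value_Suc[OF p(2) False, of l] discount_pos p(1)
          by (simp add: D_def abs_mult mult_left_mono)
      qed
    qed
  qed (use assms discount_pos discount_less_1 in auto)
  then show ?thesis by (simp add: D_def)
qed

lemma improving_stop_exists_iff:
  "(\<exists>\<sigma>. stopping_time \<sigma> \<and> \<sigma> \<noteq> (\<lambda>_. 0) \<and>
      Jh P c \<beta> l (h_stop P c \<beta> l \<sigma>) x < Jh P c \<beta> l (h_stop P c \<beta> l (\<lambda>_. 0)) x)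
   \<longleftrightarrow> Hf P c \<beta> l x 0 < Hf P c \<beta> l x 1"
proof -
  have act_now: "Jh P c \<beta> l (h_stop P c \<beta> l (\<lambda>_. 0)) x = Hf P c \<beta> l x 1"
    by (rule Jh_h_stop_zero) (simp_all add: stopping_time_def)
  show ?thesis
  proof
    assume "\<exists>\<sigma>. stopping_time \<sigma> \<and> \<sigma> \<noteq> (\<lambda>_. 0) \<and>
      Jh P c \<beta> l (h_stop P c \<beta> l \<sigma>) x < Jh P c \<beta> l (h_stop P c \<beta> l (\<lambda>_. 0)) x"
    then obtain \<sigma> where "Jh P c \<beta> l (h_stop P c \<beta> l \<sigma>) x < Hf P c \<beta> l x 1"
      unfolding act_now by blast
    moreover have "Vf P c \<beta> l x \<le> Jh P c \<beta> l (h_stop P c \<beta> l \<sigma>) x"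
      by (rule Vf_le_Jh[OF binary_h_stop])
    ultimately show "Hf P c \<beta> l x 0 < Hf P c \<beta> l x 1"
      using Vf_eq_min_Hf[of l x] by (auto simp: min_def split: if_splits)
  next
    assume "Hf P c \<beta> l x 0 < Hf P c \<beta> l x 1"
    then show "\<exists>\<sigma>. stopping_time \<sigma> \<and> \<sigma> \<noteq> (\<lambda>_. 0) \<and>
      Jh P c \<beta> l (h_stop P c \<beta> l \<sigma>) x < Jh P c \<beta> l (h_stop P c \<beta> l (\<lambda>_. 0)) x"
      using stopping_time_first_active_time first_active_time_nonzero
      by (auto simp: act_now Jh_h_stop_first_active_time fun_eq_iff intro!: exI[of _ "first_active_time l"])
  qed
qed

lemma Jh_h_stop_less_act_now_iff:
  assumes "stopping_time \<sigma>"
  shows "Jh P c \<beta> l (h_stop P c \<beta> l \<sigma>) x < Jh P c \<beta> l (h_stop P c \<beta> l (\<lambda>_. 0)) x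
     \<longleftrightarrow> (1 - \<beta>) * (Lf P c \<beta> x \<sigma> - c x 1) < Wf P c \<beta> l x - Estop P \<beta> x \<sigma> (Wf P c \<beta> l)"
proof -
  have act_now: "Jh P c \<beta> l (h_stop P c \<beta> l (\<lambda>_. 0)) x = (1 - \<beta>) * c x 1 + Wf P c \<beta> l x"
    using Jh_h_stop_zero[of "\<lambda>_. 0" x l] Hf_1_eq[of l x] by (simp add: stopping_time_def)
  show ?thesis
    unfolding Jh_h_stop_eq_stop_value[OF assms] stop_value_eq[symmetric] act_now right_diff_distrib
    by linarith
qed

end

theorem proposition1:
  fixes P :: "nat \<Rightarrow> 'x::countable \<Rightarrow> 'x \<Rightarrow> real"
    and c :: "'x \<Rightarrow> nat \<Rightarrow> real"
    and \<beta> l :: real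
  assumes "0 < \<beta>" and "\<beta> < 1"
    and "\<forall>a\<in>{0,1}. \<forall>x y. 0 \<le> P a x y"
    and "\<forall>a\<in>{0,1}. \<forall>x. ((\<lambda>y. P a x y) has_sum 1) UNIV"
    and "\<exists>B. \<forall>x. \<forall>a\<in>{0,1}. \<bar>c x a\<bar> \<le> B"
  defines "Pa \<equiv> {x. gf P c \<beta> l x = 0}"
    and "Pb \<equiv> {x. Hf P c \<beta> l x 0 < Hf P c \<beta> l x 1}"
    and "Pc \<equiv> {x. \<exists>\<sigma>. stopping_time \<sigma> \<and> \<sigma> \<noteq> (\<lambda>_. 0) \<and>
                  Jh P c \<beta> l (h_stop P c \<beta> l \<sigma>) x < Jh P c \<beta> l (h_stop P c \<beta> l (\<lambda>_. 0)) x}"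
    and "Pd \<equiv> {x. \<exists>\<sigma>. stopping_time \<sigma> \<and> \<sigma> \<noteq> (\<lambda>_. 0) \<and>
                  (1 - \<beta>) * (Lf P c \<beta> x \<sigma> - c x 1)
                    < Wf P c \<beta> l x - Estop P \<beta> x \<sigma> (Wf P c \<beta> l)}"
  shows "Pa = Pb \<and> Pb = Pc \<and> Pc = Pd"
proof -
  obtain B where "\<forall>x. \<forall>a\<in>{0,1}. \<bar>c x a\<bar> \<le> B"
    using assms(5) by blast
  moreover have "a \<in> {0, 1}" if "a \<le> 1" for a :: nat
    using that by auto
  ultimately interpret discounted_bandit P c \<beta> B
    using assms(1-4) by unfold_locales blast+
  have "Pa = Pb"
    unfolding Pa_def Pb_def gf_def by auto
  moreover have "Pb = Pc"
    unfolding Pb_def Pc_def using improving_stop_exists_iff by blast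
  moreover have "Pc = Pd"
    unfolding Pc_def Pd_def using Jh_h_stop_less_act_now_iff by blast
  ultimately show ?thesis by blast
qed

end
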